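(* Let $n\ge 1$ and $k\ge 3$ be integers and $p:=k-2$. Let $\{v_1,\dots,v_n\}$ be an orthonormal basis of $\mathbb{R}^n$ and $\lambda_r,\kappa_r\in\mathbb{R}$ for $r=1,\dots,n$, with $\kappa_r<0$ for all $r$. Let $\mathcal A=\sum_{r=1}^n\lambda_r v_r^{\otimes k}$, $K=\sum_{r=1}^n\kappa_r v_rv_r^\top$, and consider $\dot x=Kx+\mathcal A x^{k-1}$ on $\mathbb{R}^n$. Let $\mathcal I_+:=\{r:\lambda_r>0\}$ and $\mathcal I_-:=\{r:\lambda_r<0\}$. For $r\in\mathcal I_+$ let $c_r:=(-\kappa_r/\lambda_r)^{1/p}>0$, and, when $p$ is odd, for $r\in\mathcal I_-$ let $c_r:=-(\kappa_r/\lambda_r)^{1/p}<0$ (the real $p$-th root of $-\kappa_r/\lambda_r$). (i) If $p$ is even, let $\mathcal R_{\mathrm{even}}:=\{x_0\in\mathbb{R}^n: |v_r^\top x_0|<c_r\ \forall r\in\mathcal I_+\}$. Then for every $x(0)=x_0\in\mathcal R_{\mathrm{even}}$, the solution exists for all $t\ge 0$, satisfies $\lim_{t\to\infty}x(t)=0$, and $\mathcal R_{\mathrm{even}}$ is forward invariant. (ii) If $p$ is odd, let $\mathcal R_{\mathrm{odd}}:=\{x_0\in\mathbb{R}^n: v_r^\top x_0<c_r\ \forall r\in\mathcal I_+,\ v_r^\top x_0>c_r\ \forall r\in\mathcal I_-\}$. Then for every $x(0)=x_0\in\mathcal R_{\mathrm{odd}}$, the solution exists for all $t\ge 0$, satisfies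 $\lim_{t\to\infty}x(t)=0$, and $\mathcal R_{\mathrm{odd}}$ is forward invariant.
   Context: For $v\in\mathbb{R}^n$, $v^{\otimes k}$ is the $k$th-order tensor with entries $(v^{\otimes k})_{i_1\cdots i_k}=v_{i_1}\cdots v_{i_k}$. For a $k$th-order tensor $\mathcal A=(a_{i_1\cdots i_k})$ and $x\in\mathbb{R}^n$, $(\mathcal A x^{k-1})_i=\sum_{i_2,\dots,i_k=1}^n a_{i i_2\cdots i_k}x_{i_2}\cdots x_{i_k}$. *)

theory Defs
  imports "HOL-Analysis.Analysis"
begin

text \<open>A k-th order tensor on R^n is represented by its entry function on index lists
  (only lists of length k are relevant). Indices range over the finite type 'n.\<close>

definition tensor_power :: "real^'n \<Rightarrow> ('n list \<Rightarrow> real)" where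
  "tensor_power v = (\<lambda>is. prod_list (map (\<lambda>i. v $ i) is))"

definition tensor_apply :: "nat \<Rightarrow> ('n::finite list \<Rightarrow> real) \<Rightarrow> real^'n \<Rightarrow> real^'n" where
  "tensor_apply k A x =
     (\<chi> i. \<Sum>js\<in>{js. length js = k - 1}. A (i # js) * prod_list (map (\<lambda>j. x $ j) js))"

definition outer :: "real^'n \<Rightarrow> real^'n \<Rightarrow> real^'n^'n" where
  "outer u w = (\<chi> i j. u $ i * w $ j)"

definition is_forward_solution :: "(real^'n \<Rightarrow> real^'n) \<Rightarrow> real^'n \<Rightarrow> (real \<Rightarrow> real^'n) \<Rightarrow> bool" where
  "is_forward_solution F x0 x \<longleftrightarrow> x 0 = x0 \<and>
     (\<forall>t\<ge>0. (x has_vector_derivative F (x t)) (at t within {0..}))"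

end

theory Submission
  imports Defs
begin

text \<open>In the orthonormal frame \<open>v r\<close> the system decouples: each coordinate \<open>y = v r \<bullet> x\<close>
  solves the scalar Bernoulli equation \<open>y' = kap * y + lam * y ^ (p + 1)\<close>, which can be integrated
  explicitly. For \<open>kap < 0\<close> its solution exists on \<open>[0, \<infinity>)\<close> and decays to \<open>0\<close> as soon as
  \<open>a = lam / kap * y0 ^ p > -1\<close>, a condition that persists along the solution; uniqueness follows
  from a Gronwall estimate, the right-hand side being locally Lipschitz. Both regions of the theorem
  are exactly the sets of initial values with \<open>a > -1\<close> in every coordinate.\<close>

lemma prod_list_map_mult:
  "prod_list (map (\<lambda>x. f x * g x) xs) = prod_list (map f xs) * (prod_list (map g xs) :: 'a::comm_monoid_mult)"
  by (induction xs) (simp_all add: mult_ac)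

lemma sum_prod_list_lists_of_length:
  fixes f :: "'a::finite \<Rightarrow> 'b::comm_semiring_1"
  shows "(\<Sum>xs\<in>{xs. length xs = m}. prod_list (map f xs)) = (\<Sum>x\<in>UNIV. f x) ^ m"
proof (induction m)
  case 0
  then show ?case by simp
next
  case (Suc m)
  have lists_Suc: "{xs. length xs = Suc m} = (\<lambda>(x, xs). x # xs) ` (UNIV \<times> {xs. length xs = m})"
    by (auto simp: image_def length_Suc_conv)
  have "inj_on (\<lambda>(x, xs). x # xs) (UNIV \<times> {xs::'a list. length xs = m})"
    by (auto simp: inj_on_def)
  then have "(\<Sum>xs\<in>{xs. length xs = Suc m}. prod_list (map f xs))
      = (\<Sum>(x, xs)\<in>UNIV \<times> {xs. length xs = m}. f x * prod_list (map f xs))"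
    unfolding lists_Suc by (simp add: sum.reindex case_prod_unfold)
  also have "\<dots> = (\<Sum>x\<in>UNIV. f x) * (\<Sum>xs\<in>{xs. length xs = m}. prod_list (map f xs))"
    by (simp add: sum_product sum.cartesian_product)
  finally show ?case using Suc by simp
qed

lemma tensor_apply_tensor_power:
  "tensor_apply k (tensor_power v) x = (v \<bullet> x) ^ (k - 1) *\<^sub>R v"
proof -
  have "(\<Sum>js\<in>{js. length js = k - 1}. tensor_power v (i # js) * prod_list (map (\<lambda>j. x $ j) js))
      = v $ i * (\<Sum>js\<in>{js. length js = k - 1}. prod_list (map (\<lambda>j. v $ j * x $ j) js))" for i
    by (simp add: tensor_power_def prod_list_map_mult sum_distrib_left mult_ac)
  then show ?thesis
    by (simp add: tensor_apply_def vec_eq_iff sum_prod_list_lists_of_length inner_vec_def mult.commute)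
qed

lemma tensor_apply_sum:
  "tensor_apply k (\<lambda>is. \<Sum>r\<in>I. c r * A r is) x = (\<Sum>r\<in>I. c r *\<^sub>R tensor_apply k (A r) x)"
  by (simp add: tensor_apply_def vec_eq_iff sum_distrib_left sum_distrib_right mult_ac
      sum.swap[where A = I])

lemma sum_scaleR_outer_mult_vec:
  "(\<Sum>r\<in>I. c r *\<^sub>R outer (v r) (v r)) *v x = (\<Sum>r\<in>I. (c r * (v r \<bullet> x)) *\<^sub>R v r)"
  by (simp add: matrix_vector_mult_def outer_def vec_eq_iff inner_vec_def
      sum_distrib_left sum_distrib_right mult_ac sum.swap[where A = I])

lemma inner_sum_orthonormal:
  fixes v :: "'i::finite \<Rightarrow> 'a::real_inner"
  assumes orthonormal: "\<forall>r s. v r \<bullet> v s = (if r = s then 1 else 0)"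
  shows "v s \<bullet> (\<Sum>r\<in>UNIV. a r *\<^sub>R v r) = a s"
  by (simp add: inner_sum_right orthonormal if_distrib[of "(*) _"] cong: if_cong)

lemma orthonormal_expansion:
  fixes v :: "'n::finite \<Rightarrow> real^'n"
  assumes orthonormal: "\<forall>r s. v r \<bullet> v s = (if r = s then 1 else 0)"
  shows "(\<Sum>r\<in>UNIV. (v r \<bullet> x) *\<^sub>R v r) = x"
proof -
  define V :: "real^'n^'n" where "V = (\<chi> r. v r)"
  have "V ** transpose V = mat 1"
    using orthonormal
    by (simp add: V_def vec_eq_iff matrix_matrix_mult_def transpose_def mat_def inner_vec_def mult.commute)
  then have "transpose V ** V = mat 1"
    by (rule matrix_left_right_inverse[THEN iffD1])
  then have "transpose V *v (V *v x) = x"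
    by (simp add: matrix_vector_mul_assoc)
  moreover have "V *v x = (\<chi> r. v r \<bullet> x)"
    by (simp add: V_def matrix_mult_dot)
  moreover have "transpose V *v y = (\<Sum>r\<in>UNIV. y $ r *\<^sub>R v r)" for y
    by (simp add: matrix_mult_sum row_def V_def scalar_mult_eq_scaleR)
  ultimately show ?thesis
    by simp
qed

lemma is_forward_solution_orthonormal_iff:
  fixes v :: "'n::finite \<Rightarrow> real^'n" and f :: "'n \<Rightarrow> real \<Rightarrow> real"
  assumes orthonormal: "\<forall>r s. v r \<bullet> v s = (if r = s then 1 else 0)"
    and F: "\<And>y. F y = (\<Sum>r\<in>UNIV. f r (v r \<bullet> y) *\<^sub>R v r)"
  shows "is_forward_solution F x0 x \<longleftrightarrow>
    (\<forall>r. v r \<bullet> x 0 = v r \<bullet> x0 \<and>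
      (\<forall>t\<ge>0. ((\<lambda>t. v r \<bullet> x t) has_real_derivative f r (v r \<bullet> x t)) (at t within {0..})))"
    (is "_ \<longleftrightarrow> (\<forall>r. ?coord r)")
proof
  assume sol: "is_forward_solution F x0 x"
  show "\<forall>r. ?coord r"
  proof (intro allI conjI impI)
    fix r and t :: real
    assume "t \<ge> 0"
    with sol have "(x has_vector_derivative F (x t)) (at t within {0..})"
      by (simp add: is_forward_solution_def)
    from bounded_linear.has_vector_derivative[OF bounded_linear_inner_right this, of "v r"]
    show "((\<lambda>t. v r \<bullet> x t) has_real_derivative f r (v r \<bullet> x t)) (at t within {0..})"
      by (simp add: F inner_sum_orthonormal[OF orthonormal] has_real_derivative_iff_has_vector_derivative)
  qed (use sol in \<open>simp add: is_forward_solution_def\<close>)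
next
  assume coord: "\<forall>r. ?coord r"
  have expand: "x = (\<lambda>t. \<Sum>r\<in>UNIV. (v r \<bullet> x t) *\<^sub>R v r)"
    by (simp add: orthonormal_expansion[OF orthonormal])
  show "is_forward_solution F x0 x"
    unfolding is_forward_solution_def
  proof (intro conjI allI impI)
    show "x 0 = x0"
      using coord orthonormal_expansion[OF orthonormal] by (metis (no_types, lifting) sum.cong)
  next
    fix t :: real
    assume "t \<ge> 0"
    with coord have "((\<lambda>t. (v r \<bullet> x t) *\<^sub>R v r) has_vector_derivative
        f r (v r \<bullet> x t) *\<^sub>R v r) (at t within {0..})" for r
      using has_vector_derivative_scaleR[OF _ has_vector_derivative_const] by fastforce
    then have "((\<lambda>t. \<Sum>r\<in>UNIV. (v r \<bullet> x t) *\<^sub>R v r) has_vector_derivative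
        (\<Sum>r\<in>UNIV. f r (v r \<bullet> x t) *\<^sub>R v r)) (at t within {0..})"
      by (rule has_vector_derivative_sum)
    then show "(x has_vector_derivative F (x t)) (at t within {0..})"
      by (subst expand) (simp add: F)
  qed
qed

lemma continuous_derivative_imp_lipschitz_on_interval:
  fixes g g' :: "real \<Rightarrow> real"
  assumes deriv: "\<And>u. (g has_real_derivative g' u) (at u)" and cont: "continuous_on UNIV g'"
  shows "\<exists>L. L-lipschitz_on {a..b} g"
proof -
  have "compact (g' ` {a..b})"
    using cont by (intro compact_continuous_image) (auto intro: continuous_on_subset)
  then obtain B where B: "\<And>u. u \<in> {a..b} \<Longrightarrow> \<bar>g' u\<bar> \<le> B"
    using compact_imp_bounded bounded_real by (metis imageI)
  have "(max B 0)-lipschitz_on {a..b} g"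
  proof (rule bounded_derivative_imp_lipschitz)
    fix u assume "u \<in> {a..b}"
    show "(g has_derivative (*) (g' u)) (at u within {a..b})"
      using has_field_derivative_at_within[OF deriv] by (simp add: has_field_derivative_def)
    show "onorm ((*) (g' u)) \<le> max B 0"
      using B[OF \<open>u \<in> {a..b}\<close>] by (intro onorm_le) (auto simp: abs_mult intro!: mult_right_mono)
  qed auto
  then show ?thesis ..
qed

lemma scalar_ode_forward_unique:
  fixes g y z :: "real \<Rightarrow> real"
  assumes lipschitz: "\<And>M. \<exists>L. L-lipschitz_on {-M..M} g"
    and y: "\<forall>t\<ge>0. (y has_real_derivative g (y t)) (at t within {0..})"
    and z: "\<forall>t\<ge>0. (z has_real_derivative g (z t)) (at t within {0..})"
    and "y 0 = z 0" and "T \<ge> 0"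
  shows "y T = z T"
proof -
  have "continuous_on {0..T} y"
    by (rule DERIV_continuous_on[where D = "\<lambda>t. g (y t)"]) (use y in \<open>auto intro: DERIV_subset\<close>)
  moreover have "continuous_on {0..T} z"
    by (rule DERIV_continuous_on[where D = "\<lambda>t. g (z t)"]) (use z in \<open>auto intro: DERIV_subset\<close>)
  ultimately have "compact (y ` {0..T} \<union> z ` {0..T})"
    by (intro compact_Un compact_continuous_image compact_Icc)
  then obtain M where "\<forall>w \<in> y ` {0..T} \<union> z ` {0..T}. \<bar>w\<bar> \<le> M"
    using compact_imp_bounded bounded_real by blast
  then have M: "\<And>s. s \<in> {0..T} \<Longrightarrow> y s \<in> {-M..M} \<and> z s \<in> {-M..M}"
    by (metis UnCI abs_le_iff atLeastAtMost_iff imageI minus_le_iff)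
  obtain L where L: "L-lipschitz_on {-M..M} g"
    using lipschitz by blast
  \<comment> \<open>Gronwall: the Lipschitz bound makes \<open>phi\<close> nonincreasing, and \<open>phi 0 = 0\<close>.\<close>
  define phi where "phi s = (y s - z s)\<^sup>2 * exp (- 2 * L * s)" for s
  have "phi T \<le> phi 0"
  proof (rule DERIV_nonpos_imp_decreasing_open[OF \<open>T \<ge> 0\<close>])
    fix s assume s: "0 < s" "s < T"
    have "at s within {0..} = at s"
      using s by (intro at_within_nhd[of _ "{0<..}"]) auto
    then have "(y has_real_derivative g (y s)) (at s)" "(z has_real_derivative g (z s)) (at s)"
      using y[rule_format, of s] z[rule_format, of s] s by simp_all
    then have "(phi has_real_derivative
        2 * exp (- 2 * L * s) * ((y s - z s) * (g (y s) - g (z s)) - L * (y s - z s)\<^sup>2)) (at s)"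
      unfolding phi_def by (auto intro!: derivative_eq_intros simp: power2_eq_square algebra_simps)
    moreover have "(y s - z s) * (g (y s) - g (z s)) \<le> L * (y s - z s)\<^sup>2"
    proof -
      have "\<bar>g (y s) - g (z s)\<bar> \<le> L * \<bar>y s - z s\<bar>"
        using lipschitz_onD[OF L, of "y s" "z s"] M[of s] s by (simp add: dist_real_def)
      then have "\<bar>y s - z s\<bar> * \<bar>g (y s) - g (z s)\<bar> \<le> \<bar>y s - z s\<bar> * (L * \<bar>y s - z s\<bar>)"
        by (rule mult_left_mono) simp
      then show ?thesis
        by (simp add: power2_eq_square abs_mult[symmetric] mult_ac)
    qed
    ultimately show "\<exists>d. (phi has_real_derivative d) (at s) \<and> d \<le> 0"
      by (intro exI conjI) (auto intro!: mult_nonneg_nonpos)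
  qed (use \<open>continuous_on {0..T} y\<close> \<open>continuous_on {0..T} z\<close> in \<open>auto simp: phi_def intro!: continuous_intros\<close>)
  then have "(y T - z T)\<^sup>2 \<le> 0"
    using \<open>y 0 = z 0\<close> by (simp add: phi_def mult_le_0_iff)
  then show ?thesis
    by simp
qed

text \<open>The substitution \<open>w = y powr (- p)\<close> turns \<open>y' = kap * y + lam * y ^ (p + 1)\<close> into the
  linear equation \<open>w' = - p * kap * w - p * lam\<close>.\<close>

definition bernoulli_solution :: "real \<Rightarrow> real \<Rightarrow> nat \<Rightarrow> real \<Rightarrow> real \<Rightarrow> real" where
  "bernoulli_solution kap lam p y0 t =
     y0 * exp (kap * t) * (1 + lam / kap * y0 ^ p * (1 - exp (p * kap * t))) powr (- 1 / p)"

lemma bernoulli_solution_0 [simp]: "bernoulli_solution kap lam p y0 0 = y0"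
  by (simp add: bernoulli_solution_def)

context
  fixes kap lam y0 :: real and p :: nat
  assumes kap: "kap < 0" and p: "p \<ge> 1" and admissible: "lam / kap * y0 ^ p > -1"
begin

lemma bernoulli_base_pos:
  assumes "t \<ge> 0"
  shows "1 + lam / kap * y0 ^ p * (1 - exp (p * kap * t)) > 0"
proof -
  define a where "a = lam / kap * y0 ^ p"
  define E where "E = exp (p * kap * t)"
  have "E \<le> 1"
    using kap assms by (simp add: E_def mult_nonpos_nonneg mult_nonneg_nonpos)
  moreover have "E > 0" "a > -1"
    using admissible by (simp_all add: E_def a_def)
  ultimately have "(1 + a) * (1 - E) + E > 0"
    by (simp add: add_nonneg_pos)
  then have "1 + a * (1 - E) > 0"
    by (simp add: algebra_simps)
  then show ?thesis
    unfolding a_def E_def .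
qed

lemma bernoulli_solution_power:
  assumes "t \<ge> 0"
  shows "bernoulli_solution kap lam p y0 t ^ p =
    y0 ^ p * exp (p * kap * t) / (1 + lam / kap * y0 ^ p * (1 - exp (p * kap * t)))"
proof -
  define D where "D = 1 + lam / kap * y0 ^ p * (1 - exp (p * kap * t))"
  have "D > 0"
    using bernoulli_base_pos[OF assms] by (simp add: D_def)
  then have "(D powr (- 1 / p)) ^ p = D powr (p * (- 1 / p))"
    by (simp add: powr_power)
  also have "\<dots> = inverse D"
    using p \<open>D > 0\<close> by (simp add: powr_minus)
  finally have D_pow: "(D powr (- 1 / p)) ^ p = inverse D" .
  have exp_pow: "exp (kap * t) ^ p = exp (p * kap * t)"
    by (simp add: exp_of_nat_mult[symmetric] mult_ac)
  show ?thesis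
    unfolding bernoulli_solution_def D_def[symmetric] power_mult_distrib D_pow exp_pow
    by (simp add: field_simps)
qed

lemma bernoulli_solution_has_derivative:
  assumes "t \<ge> 0"
  shows "(bernoulli_solution kap lam p y0 has_real_derivative
    kap * bernoulli_solution kap lam p y0 t + lam * bernoulli_solution kap lam p y0 t ^ (p + 1)) (at t)"
proof -
  define a where "a = lam / kap * y0 ^ p"
  define E where "E t = exp (p * kap * t)" for t
  define D where "D t = 1 + a * (1 - E t)" for t
  let ?y = "bernoulli_solution kap lam p y0"
  have sol: "?y = (\<lambda>t. y0 * exp (kap * t) * D t powr (- 1 / p))"
    by (simp add: fun_eq_iff bernoulli_solution_def a_def D_def E_def)
  have "D t > 0"
    using bernoulli_base_pos[OF assms] by (simp add: D_def E_def a_def)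
  have "(D has_real_derivative - a * (p * kap * E t)) (at t)"
    unfolding D_def[abs_def] E_def by (auto intro!: derivative_eq_intros)
  from DERIV_powr[OF this \<open>D t > 0\<close> DERIV_const, of "- 1 / p"]
  have "((\<lambda>t. D t powr (- 1 / p)) has_real_derivative
      D t powr (- 1 / p) * (a * kap * E t / D t)) (at t)"
    using p by (simp add: field_simps)
  moreover have "((\<lambda>t. y0 * exp (kap * t)) has_real_derivative y0 * (kap * exp (kap * t))) (at t)"
    by (auto intro!: derivative_eq_intros)
  ultimately have "(?y has_real_derivative
      y0 * (kap * exp (kap * t)) * D t powr (- 1 / p)
      + D t powr (- 1 / p) * (a * kap * E t / D t) * (y0 * exp (kap * t))) (at t)"
    unfolding sol by (intro DERIV_mult)
  moreover have "lam * ?y t ^ (p + 1) = ?y t * (a * kap * E t / D t)"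
  proof -
    have "?y t ^ p = y0 ^ p * E t / D t"
      unfolding D_def E_def a_def by (rule bernoulli_solution_power[OF assms])
    moreover have "lam * y0 ^ p = a * kap"
      using kap by (simp add: a_def)
    ultimately show ?thesis
      by (simp add: mult_ac)
  qed
  ultimately show ?thesis
    unfolding sol by (simp add: algebra_simps)
qed

lemma bernoulli_solution_tendsto_0: "(bernoulli_solution kap lam p y0 \<longlongrightarrow> 0) at_top"
proof -
  define a where "a = lam / kap * y0 ^ p"
  have exp_decay: "((\<lambda>t. exp (c * t)) \<longlongrightarrow> 0) at_top" if "c < 0" for c :: real
    using that by real_asymp
  have "1 + a \<noteq> 0"
    using admissible by (simp add: a_def)
  then have "((\<lambda>t. y0 * exp (kap * t) * (1 + a * (1 - exp (p * kap * t))) powr (- 1 / p))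
      \<longlongrightarrow> y0 * 0 * (1 + a * (1 - 0)) powr (- 1 / p)) at_top"
    using kap p by (intro tendsto_intros exp_decay) (auto simp: mult_pos_neg)
  then show ?thesis
    by (simp add: bernoulli_solution_def[abs_def] a_def)
qed

lemma bernoulli_solution_admissible:
  assumes "t \<ge> 0"
  shows "lam / kap * bernoulli_solution kap lam p y0 t ^ p > -1"
proof -
  define a where "a = lam / kap * y0 ^ p"
  define E where "E = exp (p * kap * t)"
  have "1 + a * (1 - E) > 0"
    using bernoulli_base_pos[OF assms] by (simp add: a_def E_def)
  moreover have "a > -1"
    using admissible by (simp add: a_def)
  then have "a * E > - (1 + a * (1 - E))"
    by (simp add: algebra_simps)
  moreover have "lam / kap * bernoulli_solution kap lam p y0 t ^ p = a * E / (1 + a * (1 - E))"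
    using bernoulli_solution_power[OF assms] by (simp add: a_def E_def)
  ultimately show ?thesis
    by (simp add: less_divide_eq)
qed

end

lemma bernoulli_admissible_iff_even:
  fixes kap lam y :: real
  assumes "kap < 0" "even p" "p \<ge> 1"
  shows "(lam > 0 \<longrightarrow> \<bar>y\<bar> < root p (- kap / lam)) \<longleftrightarrow> lam / kap * y ^ p > -1"
proof (cases "lam > 0")
  case True
  have "\<bar>y\<bar> < root p (- kap / lam) \<longleftrightarrow> root p (\<bar>y\<bar> ^ p) < root p (- kap / lam)"
    using assms by (simp add: real_root_power_cancel)
  also have "\<dots> \<longleftrightarrow> y ^ p < - kap / lam"
    using assms by (simp add: power_even_abs)
  also have "\<dots> \<longleftrightarrow> lam / kap * y ^ p > -1"
    using assms True by (simp add: field_simps)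
  finally show ?thesis
    using True by simp
next
  case False
  then have "lam / kap * y ^ p \<ge> 0"
    using assms by (intro mult_nonneg_nonneg) (auto simp: divide_nonpos_neg zero_le_even_power)
  then show ?thesis
    using False by simp
qed

lemma bernoulli_admissible_iff_odd:
  fixes kap lam y :: real
  assumes "kap < 0" "odd p"
  shows "((lam > 0 \<longrightarrow> y < root p (- kap / lam)) \<and> (lam < 0 \<longrightarrow> y > - root p (kap / lam)))
     \<longleftrightarrow> lam / kap * y ^ p > -1"
proof -
  have p: "p > 0"
    using assms by (cases p) auto
  have root_less_iff: "y < root p c \<longleftrightarrow> y ^ p < c" "y > root p c \<longleftrightarrow> y ^ p > c" for c
    using odd_real_root_power_cancel[OF \<open>odd p\<close>, of y] p by (metis real_root_less_iff)+
  consider "lam > 0" | "lam < 0" | "lam = 0"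
    by linarith
  then show ?thesis
  proof cases
    case 1
    then show ?thesis
      using assms by (simp add: root_less_iff field_simps)
  next
    case 2
    then show ?thesis
      using assms by (simp add: real_root_minus[symmetric] root_less_iff field_simps)
  qed simp
qed

lemma bernoulli_rhs_lipschitz_on_interval:
  fixes kap lam :: real
  shows "\<exists>L. L-lipschitz_on {a..b} (\<lambda>u. kap * u + lam * u ^ (p + 1))"
proof (rule continuous_derivative_imp_lipschitz_on_interval)
  fix u :: real
  have "((\<lambda>u. u ^ (p + 1)) has_real_derivative real (p + 1) * u ^ p) (at u)"
    using DERIV_pow[of "p + 1" u] by simp
  from DERIV_add[OF DERIV_cmult[OF DERIV_ident] DERIV_cmult[OF this]]
  show "((\<lambda>u. kap * u + lam * u ^ (p + 1)) has_real_derivative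
      kap + lam * (real (p + 1) * u ^ p)) (at u)"
    by simp
qed (intro continuous_intros)

context
  fixes v :: "'n::finite \<Rightarrow> real^'n" and kap lam :: "'n \<Rightarrow> real" and p :: nat
    and F :: "real^'n \<Rightarrow> real^'n"
  assumes orthonormal: "\<forall>r s. v r \<bullet> v s = (if r = s then 1 else 0)"
    and kap: "\<forall>r. kap r < 0" and p: "p \<ge> 1"
    and F: "\<And>x. F x = (\<Sum>r\<in>UNIV. (kap r * (v r \<bullet> x) + lam r * (v r \<bullet> x) ^ (p + 1)) *\<^sub>R v r)"
begin

lemma bernoulli_system_solution_iff:
  "is_forward_solution F x0 x \<longleftrightarrow>
    (\<forall>r. v r \<bullet> x 0 = v r \<bullet> x0 \<and>
      (\<forall>t\<ge>0. ((\<lambda>t. v r \<bullet> x t) has_real_derivative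
        kap r * (v r \<bullet> x t) + lam r * (v r \<bullet> x t) ^ (p + 1)) (at t within {0..})))"
  by (rule is_forward_solution_orthonormal_iff[where f = "\<lambda>r u. kap r * u + lam r * u ^ (p + 1)",
        OF orthonormal F])

context
  fixes x0 :: "real^'n"
  assumes admissible: "\<forall>r. lam r / kap r * (v r \<bullet> x0) ^ p > -1"
begin

lemma bernoulli_system_coordinate_has_derivative:
  assumes "t \<ge> 0"
  shows "(bernoulli_solution (kap r) (lam r) p (v r \<bullet> x0) has_real_derivative
      kap r * bernoulli_solution (kap r) (lam r) p (v r \<bullet> x0) t
      + lam r * bernoulli_solution (kap r) (lam r) p (v r \<bullet> x0) t ^ (p + 1)) (at t within {0..})"
  using bernoulli_solution_has_derivative[OF kap[rule_format] p admissible[rule_format] assms]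
  by (rule has_field_derivative_at_within)

lemma bernoulli_system_solution_exists:
  "is_forward_solution F x0 (\<lambda>t. \<Sum>r\<in>UNIV. bernoulli_solution (kap r) (lam r) p (v r \<bullet> x0) t *\<^sub>R v r)"
  unfolding bernoulli_system_solution_iff inner_sum_orthonormal[OF orthonormal]
  using bernoulli_system_coordinate_has_derivative by simp

lemma bernoulli_system_solution_coordinate:
  assumes "is_forward_solution F x0 x" and "t \<ge> 0"
  shows "v r \<bullet> x t = bernoulli_solution (kap r) (lam r) p (v r \<bullet> x0) t"
proof (rule scalar_ode_forward_unique[OF bernoulli_rhs_lipschitz_on_interval _ _ _ \<open>t \<ge> 0\<close>])
  show "\<forall>t\<ge>0. ((\<lambda>t. v r \<bullet> x t) has_real_derivative
      kap r * (v r \<bullet> x t) + lam r * (v r \<bullet> x t) ^ (p + 1)) (at t within {0..})"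
    and "v r \<bullet> x 0 = bernoulli_solution (kap r) (lam r) p (v r \<bullet> x0) 0"
    using assms(1) by (simp_all add: bernoulli_system_solution_iff)
  show "\<forall>t\<ge>0. (bernoulli_solution (kap r) (lam r) p (v r \<bullet> x0) has_real_derivative
      kap r * bernoulli_solution (kap r) (lam r) p (v r \<bullet> x0) t
      + lam r * bernoulli_solution (kap r) (lam r) p (v r \<bullet> x0) t ^ (p + 1)) (at t within {0..})"
    using bernoulli_system_coordinate_has_derivative by blast
qed

lemma bernoulli_system_solution_tendsto_0:
  assumes "is_forward_solution F x0 x"
  shows "(x \<longlongrightarrow> 0) at_top"
proof -
  have "((\<lambda>t. \<Sum>r\<in>UNIV. bernoulli_solution (kap r) (lam r) p (v r \<bullet> x0) t *\<^sub>R v r)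
      \<longlongrightarrow> (\<Sum>r\<in>UNIV. 0 *\<^sub>R v r)) at_top"
    using kap p admissible by (intro tendsto_intros bernoulli_solution_tendsto_0) auto
  moreover have "\<forall>\<^sub>F t in at_top. (\<Sum>r\<in>UNIV. bernoulli_solution (kap r) (lam r) p (v r \<bullet> x0) t *\<^sub>R v r) = x t"
    using eventually_ge_at_top[of 0]
    by eventually_elim
      (simp add: bernoulli_system_solution_coordinate[OF assms, symmetric]
        orthonormal_expansion[OF orthonormal])
  ultimately show ?thesis
    by (simp add: tendsto_cong)
qed

lemma bernoulli_system_solution_admissible:
  assumes "is_forward_solution F x0 x" and "t \<ge> 0"
  shows "lam r / kap r * (v r \<bullet> x t) ^ p > -1"
  using bernoulli_solution_admissible kap p admissible assms
  by (simp add: bernoulli_system_solution_coordinate)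

end

end

theorem theorem2:
  fixes v :: "'n::finite \<Rightarrow> real^'n"
    and lam kap :: "'n \<Rightarrow> real"
    and k :: nat
  assumes k3: "k \<ge> 3"
    and orthonormal: "\<forall>r s. v r \<bullet> v s = (if r = s then 1 else 0)"
    and kneg: "\<forall>r. kap r < 0"
  defines "p \<equiv> k - 2"
    and "F \<equiv> (\<lambda>x. (\<Sum>r\<in>UNIV. kap r *\<^sub>R outer (v r) (v r)) *v x
                   + tensor_apply k (\<lambda>is. \<Sum>r\<in>UNIV. lam r * tensor_power (v r) is) x)"
    and "Ipos \<equiv> {r. lam r > 0}"
    and "Ineg \<equiv> {r. lam r < 0}"
    and "c \<equiv> (\<lambda>r. if lam r > 0 then root (k - 2) (- kap r / lam r)
                   else - root (k - 2) (kap r / lam r))"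
  shows
    "(even p \<longrightarrow>
       (let R = {x0. \<forall>r\<in>Ipos. \<bar>v r \<bullet> x0\<bar> < c r} in
        \<forall>x0\<in>R. (\<exists>x. is_forward_solution F x0 x) \<and>
          (\<forall>x. is_forward_solution F x0 x \<longrightarrow>
                (x \<longlongrightarrow> 0) at_top \<and> (\<forall>t\<ge>0. x t \<in> R))))
     \<and>
     (odd p \<longrightarrow>
       (let R = {x0. (\<forall>r\<in>Ipos. v r \<bullet> x0 < c r) \<and> (\<forall>r\<in>Ineg. v r \<bullet> x0 > c r)} in
        \<forall>x0\<in>R. (\<exists>x. is_forward_solution F x0 x) \<and>
          (\<forall>x. is_forward_solution F x0 x \<longrightarrow>
                (x \<longlongrightarrow> 0) at_top \<and> (\<forall>t\<ge>0. x t \<in> R))))"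
proof -
  have p: "p \<ge> 1" and k: "k - 1 = p + 1"
    using k3 by (auto simp: p_def)
  have F_eq: "F x = (\<Sum>r\<in>UNIV. (kap r * (v r \<bullet> x) + lam r * (v r \<bullet> x) ^ (p + 1)) *\<^sub>R v r)" for x
    unfolding F_def sum_scaleR_outer_mult_vec tensor_apply_sum tensor_apply_tensor_power k
    by (simp add: scaleR_add_left sum.distrib)
  define R0 where "R0 = {x0. \<forall>r. lam r / kap r * (v r \<bullet> x0) ^ p > -1}"
  have R0: "\<forall>x0\<in>R0. (\<exists>x. is_forward_solution F x0 x) \<and>
      (\<forall>x. is_forward_solution F x0 x \<longrightarrow> (x \<longlongrightarrow> 0) at_top \<and> (\<forall>t\<ge>0. x t \<in> R0))"
    using bernoulli_system_solution_exists[OF orthonormal kneg p F_eq]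
      bernoulli_system_solution_tendsto_0[OF orthonormal kneg p F_eq]
      bernoulli_system_solution_admissible[OF orthonormal kneg p F_eq]
    by (auto simp: R0_def)
  have "even p \<Longrightarrow> {x0. \<forall>r\<in>Ipos. \<bar>v r \<bullet> x0\<bar> < c r} = R0"
    using bernoulli_admissible_iff_even kneg p by (auto simp: R0_def Ipos_def c_def p_def)
  moreover have "{x0. (\<forall>r\<in>Ipos. v r \<bullet> x0 < c r) \<and> (\<forall>r\<in>Ineg. v r \<bullet> x0 > c r)} = R0"
    if "odd p"
  proof -
    have "((lam r > 0 \<longrightarrow> y < c r) \<and> (lam r < 0 \<longrightarrow> y > c r)) \<longleftrightarrow> lam r / kap r * y ^ p > -1"
      for r y
      using bernoulli_admissible_iff_odd[of "kap r" p "lam r" y] kneg that by (auto simp: c_def p_def)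
    then show ?thesis
      by (auto simp: R0_def Ipos_def Ineg_def)
  qed
  ultimately show ?thesis
    using R0 by (simp add: Let_def)
qed

end
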